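(* Let $\Pi$ be a boolean (possibly recursive) Datalog query with propositional answer atom $\mathit{ans}$, and let $D=D^x\cup D^n$ be a relational instance partitioned into disjoint sets of exogenous tuples $D^x$ and endogenous tuples $D^n$, with $\Pi\cup D\models \mathit{ans}$. Let $\mathcal{AP}^c=\langle \Pi, D^x, D^n, \mathit{ans}\rangle$ be the associated Datalog abduction problem (extensional database $D^x$, hypotheses $D^n$, observation $\mathit{ans}$). Then a tuple $t\in D^n$ is an actual cause for $\mathit{ans}$ if and only if $t\in \mathit{Rel}(\mathcal{AP}^c)$.
   Context: A boolean Datalog query is a finite set $\Pi$ of positive Datalog rules containing a rule defining a propositional atom $\mathit{ans}$; the query is true on instance $D$ (written $\Pi\cup D\models\mathit{ans}$) if $\mathit{ans}$ belongs to the minimal model of $\Pi\cup D$. Database predicates of $D$ do not occur in rule heads. A tuple $\tau\in D^n$ is a counterfactual cause for $\mathit{ans}$ in an instance $D'$ if $\Pi\cup D'\models\mathit{ans}$ and $\Pi\cup (D'\smallsetminus\{\tau\})\not\models\mathit{ans}$; $\tau\in D^n$ is an actual cause for $\mathit{ans}$ if there is a contingency set $\Gamma\subseteq D^n$ such that $\tau$ is a counterfactual cause for $\mathit{ans}$ in $D\smallsetminus\Gamma$. For a Datalog abduction problem $\langle\Pi,E,\mathit{Hyp},\mathit{Obs}\rangle$, an abductive diagnosis is a subset-minimal $\Delta\subseteq\mathit{Hyp}$ with $\Pi\cup E\cup\Delta\models\mathit{Obs}$, and $\mathit{Rel}$ denotes the set of hypotheses belonging to at least one abductive diagnosis. *)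

theory Defs
  imports Main
begin

text \<open>Ground atoms (facts / tuples) are predicates applied to
  lists of constants.\<close>

datatype ('v, 'c) dterm = Var 'v | Const 'c

type_synonym ('p, 'v, 'c) atom = "'p \<times> ('v, 'c) dterm list"

type_synonym ('p, 'c) fact = "'p \<times> 'c list"

record ('p, 'v, 'c) rule =
  head :: "('p, 'v, 'c) atom"
  body :: "('p, 'v, 'c) atom list"

fun subst_term :: "('v \<Rightarrow> 'c) \<Rightarrow> ('v, 'c) dterm \<Rightarrow> 'c" where
  "subst_term \<sigma> (Var x) = \<sigma> x"
| "subst_term \<sigma> (Const c) = c"

definition ground_atom :: "('v \<Rightarrow> 'c) \<Rightarrow> ('p, 'v, 'c) atom \<Rightarrow> ('p, 'c) fact" where
  "ground_atom \<sigma> a = (fst a, map (subst_term \<sigma>) (snd a))"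

inductive_set minimal_model ::
  "('p, 'v, 'c) rule set \<Rightarrow> ('p, 'c) fact set \<Rightarrow> ('p, 'c) fact set"
  for \<Pi> :: "('p, 'v, 'c) rule set" and D :: "('p, 'c) fact set" where
  fact: "f \<in> D \<Longrightarrow> f \<in> minimal_model \<Pi> D"
| rule: "\<lbrakk> r \<in> \<Pi>; \<forall>b \<in> set (body r). ground_atom \<sigma> b \<in> minimal_model \<Pi> D \<rbrakk>
         \<Longrightarrow> ground_atom \<sigma> (head r) \<in> minimal_model \<Pi> D"

definition entails :: "('p, 'v, 'c) rule set \<Rightarrow> ('p, 'c) fact set \<Rightarrow> ('p, 'c) fact \<Rightarrow> bool" where
  "entails \<Pi> D a \<longleftrightarrow> a \<in> minimal_model \<Pi> D"

definition ans_atom :: "'p \<Rightarrow> ('p, 'c) fact" where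
  "ans_atom ans = (ans, [])"

definition boolean_query :: "('p, 'v, 'c) rule set \<Rightarrow> 'p \<Rightarrow> bool" where
  "boolean_query \<Pi> ans \<longleftrightarrow> finite \<Pi> \<and> (\<exists>r \<in> \<Pi>. head r = (ans, []))"

definition db_preds_not_in_heads :: "('p, 'v, 'c) rule set \<Rightarrow> ('p, 'c) fact set \<Rightarrow> bool" where
  "db_preds_not_in_heads \<Pi> D \<longleftrightarrow> (\<forall>f \<in> D. \<forall>r \<in> \<Pi>. fst (head r) \<noteq> fst f)"

definition counterfactual_cause ::
  "('p, 'v, 'c) rule set \<Rightarrow> 'p \<Rightarrow> ('p, 'c) fact set \<Rightarrow> ('p, 'c) fact \<Rightarrow> ('p, 'c) fact set \<Rightarrow> bool" where
  "counterfactual_cause \<Pi> ans Dn \<tau> D' \<longleftrightarrow>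
     \<tau> \<in> Dn \<and> entails \<Pi> D' (ans_atom ans) \<and> \<not> entails \<Pi> (D' - {\<tau>}) (ans_atom ans)"

definition actual_cause ::
  "('p, 'v, 'c) rule set \<Rightarrow> 'p \<Rightarrow> ('p, 'c) fact set \<Rightarrow> ('p, 'c) fact set \<Rightarrow> ('p, 'c) fact \<Rightarrow> bool" where
  "actual_cause \<Pi> ans D Dn \<tau> \<longleftrightarrow>
     \<tau> \<in> Dn \<and> (\<exists>\<Gamma>. \<Gamma> \<subseteq> Dn \<and> counterfactual_cause \<Pi> ans Dn \<tau> (D - \<Gamma>))"

definition abductive_diagnosis ::
  "('p, 'v, 'c) rule set \<Rightarrow> ('p, 'c) fact set \<Rightarrow> ('p, 'c) fact set \<Rightarrow> ('p, 'c) fact set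
   \<Rightarrow> ('p, 'c) fact set \<Rightarrow> bool" where
  "abductive_diagnosis \<Pi> E Hyp Obs \<Delta> \<longleftrightarrow>
     \<Delta> \<subseteq> Hyp \<and> (\<forall>ob \<in> Obs. entails \<Pi> (E \<union> \<Delta>) ob) \<and>
     (\<forall>\<Delta>'. \<Delta>' \<subset> \<Delta> \<longrightarrow> \<not> (\<forall>ob \<in> Obs. entails \<Pi> (E \<union> \<Delta>') ob))"

definition Rel ::
  "('p, 'v, 'c) rule set \<Rightarrow> ('p, 'c) fact set \<Rightarrow> ('p, 'c) fact set \<Rightarrow> ('p, 'c) fact set
   \<Rightarrow> ('p, 'c) fact set" where
  "Rel \<Pi> E Hyp Obs = {h. \<exists>\<Delta>. abductive_diagnosis \<Pi> E Hyp Obs \<Delta> \<and> h \<in> \<Delta>}"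

end

theory Submission
  imports Defs
begin

text \<open>Both sides say that \<open>t\<close> is indispensable for \<open>ans\<close> in some
  sub-instance between \<open>Dx\<close> and \<open>D\<close>. A contingency set \<open>\<Gamma>\<close> for \<open>t\<close>
  leaves the instance \<open>Dx \<union> (Dn - \<Gamma>)\<close>, which entails \<open>ans\<close>; any
  subset-minimal \<open>\<Delta> \<subseteq> Dn - \<Gamma>\<close> with \<open>Dx \<union> \<Delta>\<close> still entailing \<open>ans\<close> is a
  diagnosis, and it must contain \<open>t\<close> by monotonicity of Datalog.
  Conversely, a diagnosis \<open>\<Delta>\<close> containing \<open>t\<close> yields the contingency set
  \<open>Dn - \<Delta>\<close>, since removing \<open>t\<close> from \<open>\<Delta>\<close> breaks the entailment by minimality.\<close>

lemma minimal_model_mono: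
  assumes "f \<in> minimal_model \<Pi> D" "D \<subseteq> D'"
  shows "f \<in> minimal_model \<Pi> D'"
  using assms by (induction rule: minimal_model.induct) (auto intro: minimal_model.intros)

lemma entails_mono: "entails \<Pi> D a \<Longrightarrow> D \<subseteq> D' \<Longrightarrow> entails \<Pi> D' a"
  unfolding entails_def using minimal_model_mono by blast

lemma abductive_diagnosis_exists_subset:
  assumes "finite S" "S \<subseteq> Hyp" "\<forall>ob \<in> Obs. entails \<Pi> (E \<union> S) ob"
  obtains \<Delta> where "\<Delta> \<subseteq> S" "abductive_diagnosis \<Pi> E Hyp Obs \<Delta>"
proof -
  let ?explains = "\<lambda>X. \<forall>ob \<in> Obs. entails \<Pi> (E \<union> X) ob"
  have "finite {X. X \<subseteq> S \<and> ?explains X}"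
    using \<open>finite S\<close> by simp
  then obtain \<Delta> where \<Delta>: "\<Delta> \<subseteq> S" "?explains \<Delta>"
    and minimal: "\<forall>X. X \<subseteq> S \<and> ?explains X \<longrightarrow> X \<subseteq> \<Delta> \<longrightarrow> \<Delta> = X"
    using finite_has_minimal2[of "{X. X \<subseteq> S \<and> ?explains X}" S] assms(3) by auto
  have "\<not> ?explains X" if "X \<subset> \<Delta>" for X
    using minimal \<open>\<Delta> \<subseteq> S\<close> that by blast
  then have "abductive_diagnosis \<Pi> E Hyp Obs \<Delta>"
    unfolding abductive_diagnosis_def using \<Delta> \<open>S \<subseteq> Hyp\<close> by blast
  with \<open>\<Delta> \<subseteq> S\<close> show thesis by (rule that)
qed

lemma actual_cause_imp_Rel:
  assumes "finite Dn" "Dx \<inter> Dn = {}" "actual_cause \<Pi> ans (Dx \<union> Dn) Dn t"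
  shows "t \<in> Rel \<Pi> Dx Dn {ans_atom ans}"
proof -
  obtain \<Gamma> where "t \<in> Dn" "\<Gamma> \<subseteq> Dn" and
    entails_rest: "entails \<Pi> (Dx \<union> Dn - \<Gamma>) (ans_atom ans)" and
    not_entails_without_t: "\<not> entails \<Pi> (Dx \<union> Dn - \<Gamma> - {t}) (ans_atom ans)"
    using assms(3) unfolding actual_cause_def counterfactual_cause_def by blast
  have rest: "Dx \<union> Dn - \<Gamma> = Dx \<union> (Dn - \<Gamma>)"
    using \<open>\<Gamma> \<subseteq> Dn\<close> \<open>Dx \<inter> Dn = {}\<close> by blast
  obtain \<Delta> where "\<Delta> \<subseteq> Dn - \<Gamma>" and diagnosis: "abductive_diagnosis \<Pi> Dx Dn {ans_atom ans} \<Delta>"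
  proof (rule abductive_diagnosis_exists_subset)
    show "finite (Dn - \<Gamma>)" "Dn - \<Gamma> \<subseteq> Dn"
      using \<open>finite Dn\<close> by auto
    show "\<forall>ob \<in> {ans_atom ans}. entails \<Pi> (Dx \<union> (Dn - \<Gamma>)) ob"
      using entails_rest rest by simp
  qed
  have "t \<in> \<Delta>"
  proof (rule ccontr)
    assume "t \<notin> \<Delta>"
    then have "Dx \<union> \<Delta> \<subseteq> Dx \<union> Dn - \<Gamma> - {t}"
      using \<open>\<Delta> \<subseteq> Dn - \<Gamma>\<close> \<open>t \<in> Dn\<close> \<open>\<Gamma> \<subseteq> Dn\<close> \<open>Dx \<inter> Dn = {}\<close> by blast
    moreover have "entails \<Pi> (Dx \<union> \<Delta>) (ans_atom ans)"
      using diagnosis unfolding abductive_diagnosis_def by simp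
    ultimately show False
      using not_entails_without_t entails_mono by blast
  qed
  then show ?thesis
    using diagnosis unfolding Rel_def by blast
qed

lemma Rel_imp_actual_cause:
  assumes "Dx \<inter> Dn = {}" "t \<in> Rel \<Pi> Dx Dn {ans_atom ans}"
  shows "actual_cause \<Pi> ans (Dx \<union> Dn) Dn t"
proof -
  obtain \<Delta> where "t \<in> \<Delta>" "\<Delta> \<subseteq> Dn" and
    entails_\<Delta>: "entails \<Pi> (Dx \<union> \<Delta>) (ans_atom ans)" and
    not_entails_without_t: "\<not> entails \<Pi> (Dx \<union> (\<Delta> - {t})) (ans_atom ans)"
    using assms(2) unfolding Rel_def abductive_diagnosis_def by blast
  have "Dx \<union> Dn - (Dn - \<Delta>) = Dx \<union> \<Delta>"
    and "Dx \<union> Dn - (Dn - \<Delta>) - {t} = Dx \<union> (\<Delta> - {t})"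
    using \<open>\<Delta> \<subseteq> Dn\<close> \<open>t \<in> \<Delta>\<close> \<open>Dx \<inter> Dn = {}\<close> by auto
  then have "counterfactual_cause \<Pi> ans Dn t (Dx \<union> Dn - (Dn - \<Delta>))"
    unfolding counterfactual_cause_def
    using \<open>t \<in> \<Delta>\<close> \<open>\<Delta> \<subseteq> Dn\<close> entails_\<Delta> not_entails_without_t by auto
  moreover have "t \<in> Dn" "Dn - \<Delta> \<subseteq> Dn"
    using \<open>t \<in> \<Delta>\<close> \<open>\<Delta> \<subseteq> Dn\<close> by auto
  ultimately show ?thesis
    unfolding actual_cause_def by blast
qed

text \<open>Only finiteness and the partition of \<open>D\<close> are needed: both sides force
  \<open>t \<in> Dn\<close>, and neither the shape of \<open>\<Pi>\<close> nor \<open>\<Pi> \<union> D \<models> ans\<close> matters.\<close>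

theorem proposition2:
  fixes \<Pi> :: "('p, 'v, 'c) rule set"
    and ans :: 'p
    and D Dx Dn :: "('p, 'c) fact set"
    and t :: "('p, 'c) fact"
  assumes "boolean_query \<Pi> ans"
    and "finite D"
    and "D = Dx \<union> Dn"
    and "Dx \<inter> Dn = {}"
    and "db_preds_not_in_heads \<Pi> D"
    and "entails \<Pi> D (ans_atom ans)"
    and "t \<in> Dn"
  shows "actual_cause \<Pi> ans D Dn t \<longleftrightarrow> t \<in> Rel \<Pi> Dx Dn {ans_atom ans}"
proof -
  have "finite Dn"
    using \<open>finite D\<close> \<open>D = Dx \<union> Dn\<close> by simp
  then show ?thesis
    unfolding \<open>D = Dx \<union> Dn\<close>
    using actual_cause_imp_Rel[OF \<open>finite Dn\<close> \<open>Dx \<inter> Dn = {}\<close>]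
      Rel_imp_actual_cause[OF \<open>Dx \<inter> Dn = {}\<close>] by blast
qed

end
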